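(* Let $G$ be a graph with $m\ge1$ edges, let $k\ge1$ and $0\le p\le m$ be integers, $\ell=m-p$, and $\eta=2^k(\ell+2)$. Let $E$ be the classification instance $E(G,\eta)$ described in the context. Then $G$ has a set $U\subseteq V(G)$ with $|U|\le k$ that is incident to at least $p$ edges if and only if there is a decision tree $T$ with $dep(T)\le k$ and $|O(T,E)|\le \ell\eta$.
   Context: Fix an ordering $e_1,\dots,e_m$ of $E(G)$. For a positive integer $\eta$, $E(G,\eta)$ has features $V(G)\cup\{d_0\}$ and, for each $r\in[\eta]$ and $i\in[m]$: a negative example with $d_0=2m(r-1)+2i-1$ and, for each $v\in V(G)$, value $1$ if $v$ is an endpoint of $e_i$ and $0$ otherwise; and a positive example with $d_0=2m(r-1)+2i$ and value $0$ on every vertex feature. A decision tree (DT) is a rooted tree whose test nodes $v$ carry a feature $f(v)$ and integer threshold $\lambda(v)$ (examples with $e(f(v))\le\lambda(v)$ go left, others right) and whose leaves are labeled positive or negative. $dep(T)$ is the maximum number of test nodes on a root-to-leaf path. An example is an outlier for $T$ if it reaches a leaf with the opposite label; $O(T,E)$ is the set of outliers. *)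

theory Defs
  imports Main
begin

text \<open>Simple graph: finite vertex set V and a list es fixing the ordering e_1..e_m
of the edge set; each edge is a 2-element subset of V, no repeated edges.\<close>
definition simple_graph :: "'v set \<Rightarrow> 'v set list \<Rightarrow> bool" where
  "simple_graph V es \<longleftrightarrow> finite V \<and> distinct es \<and>
     (\<forall>e\<in>set es. e \<subseteq> V \<and> card e = 2)"

text \<open>Features: None is d_0, Some v is the vertex feature v.
An example is a pair (assignment of integer values to features, label), label True = positive.\<close>
type_synonym 'v example = "('v option \<Rightarrow> int) \<times> bool"

definition features :: "'v set \<Rightarrow> 'v option set" where
  "features V = {None} \<union> Some ` V"

text \<open>Negative example for (r,i), 1-indexed: d_0 = 2m(r-1)+2i-1, vertex v has value 1 iff v in e_i.\<close>
definition neg_ex :: "'v set list \<Rightarrow> nat \<Rightarrow> nat \<Rightarrow> 'v example" where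
  "neg_ex es r i =
     ((\<lambda>f. case f of None \<Rightarrow> int (2 * length es * (r - 1) + 2 * i) - 1
                  | Some v \<Rightarrow> (if v \<in> es ! (i - 1) then 1 else 0)), False)"

definition pos_ex :: "'v set list \<Rightarrow> nat \<Rightarrow> nat \<Rightarrow> 'v example" where
  "pos_ex es r i =
     ((\<lambda>f. case f of None \<Rightarrow> int (2 * length es * (r - 1) + 2 * i)
                  | Some v \<Rightarrow> 0), True)"

definition instance_E :: "'v set list \<Rightarrow> nat \<Rightarrow> 'v example set" where
  "instance_E es \<eta> =
     {neg_ex es r i | r i. r \<in> {1..\<eta>} \<and> i \<in> {1..length es}} \<union>
     {pos_ex es r i | r i. r \<in> {1..\<eta>} \<and> i \<in> {1..length es}}"

datatype 'f dtree = Leaf bool | Node 'f int "'f dtree" "'f dtree"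

fun dep :: "'f dtree \<Rightarrow> nat" where
  "dep (Leaf _) = 0"
| "dep (Node _ _ l r) = Suc (max (dep l) (dep r))"

fun tree_feats :: "'f dtree \<Rightarrow> 'f set" where
  "tree_feats (Leaf _) = {}"
| "tree_feats (Node f _ l r) = {f} \<union> tree_feats l \<union> tree_feats r"

fun classify :: "'f dtree \<Rightarrow> ('f \<Rightarrow> int) \<Rightarrow> bool" where
  "classify (Leaf b) x = b"
| "classify (Node f t l r) x = (if x f \<le> t then classify l x else classify r x)"

definition outliers :: "'f dtree \<Rightarrow> (('f \<Rightarrow> int) \<times> bool) set \<Rightarrow> (('f \<Rightarrow> int) \<times> bool) set" where
  "outliers T E = {e \<in> E. classify T (fst e) \<noteq> snd e}"

end

theory Submission
  imports Defs "HOL-Library.Disjoint_Sets"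
begin

text \<open>
  If U covers at least p edges, the tree that tests the vertices of U one after another and
  answers positive only when all of them are 0 misclassifies just the \<eta> copies of the negative
  examples of the at most \<ell> uncovered edges.

  Conversely, the examples of round r form a block whose d_0 values fill an interval of length
  2m. A tree of depth at most k has fewer than 2^k thresholds on d_0, so it cuts fewer than 2^k
  blocks. On an uncut block only the vertex tests matter; following the all-zero positive
  examples down, the vertices tested with threshold 0 form a set W of at most k vertices, and
  either every edge missing W contributes a misclassified negative example or a negative leaf
  misclassifies all m positive ones. Without a good cover every uncut block thus has at least
  \<ell> + 1 outliers, for a total of at least (\<eta> - 2^k + 1)(\<ell> + 1) > \<ell>\<eta>.
\<close>

lemma finite_outliers: "finite E \<Longrightarrow> finite (outliers T E)"
  by (simp add: outliers_def)

lemma outliers_Node: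
  "outliers (Node f t l r) E =
    outliers l {e \<in> E. fst e f \<le> t} \<union> outliers r {e \<in> E. \<not> fst e f \<le> t}"
  by (auto simp: outliers_def)

lemma outliers_Node_left: "\<forall>e\<in>E. fst e f \<le> t \<Longrightarrow> outliers (Node f t l r) E = outliers l E"
  by (auto simp: outliers_def)

lemma outliers_Node_right: "\<forall>e\<in>E. t < fst e f \<Longrightarrow> outliers (Node f t l r) E = outliers r E"
  by (auto simp: outliers_def)

lemma disjoint_family_outliers:
  "disjoint_family_on F R \<Longrightarrow> disjoint_family_on (\<lambda>r. outliers T (F r)) R"
  by (erule disjoint_family_on_bisimulation) (auto simp: outliers_def)

fun thresholds :: "'f \<Rightarrow> 'f dtree \<Rightarrow> int set" where
  "thresholds g (Leaf _) = {}"
| "thresholds g (Node f t l r) = (if f = g then {t} else {}) \<union> thresholds g l \<union> thresholds g r"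

lemma finite_thresholds: "finite (thresholds g T)"
  by (induction T) auto

lemma card_thresholds_le: "card (thresholds g T) \<le> 2 ^ dep T - 1"
proof (induction T)
  case (Leaf b)
  then show ?case by simp
next
  case (Node f t l r)
  have "card (thresholds g (Node f t l r))
      \<le> card (if f = g then {t} else {}) + card (thresholds g l) + card (thresholds g r)"
    by (simp only: thresholds.simps) (meson card_Un_le add_le_mono order_refl order_trans)
  also have "\<dots> \<le> 1 + (2 ^ dep l - 1) + (2 ^ dep r - 1)"
    using Node.IH by (intro add_mono) auto
  also have "\<dots> \<le> 2 * 2 ^ max (dep l) (dep r) - 1"
  proof -
    have "(2::nat) ^ dep l \<le> 2 ^ max (dep l) (dep r)" "(2::nat) ^ dep r \<le> 2 ^ max (dep l) (dep r)"
      by (simp_all add: power_increasing)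
    moreover have "(1::nat) \<le> 2 ^ dep l" "(1::nat) \<le> 2 ^ dep r"
      by simp_all
    ultimately show ?thesis by linarith
  qed
  finally show ?case by simp
qed

lemma card_meeting_disjoint_family_le:
  assumes "finite A" and "disjoint_family_on I R"
  shows "card {r \<in> R. A \<inter> I r \<noteq> {}} \<le> card A"
proof -
  let ?H = "{r \<in> R. A \<inter> I r \<noteq> {}}"
  have "\<forall>r\<in>?H. \<exists>x. x \<in> A \<inter> I r"
    by blast
  then obtain g where g: "\<forall>r\<in>?H. g r \<in> A \<inter> I r"
    by (rule bchoice[THEN exE])
  have "inj_on g ?H"
  proof (rule inj_onI)
    fix r r'
    assume "r \<in> ?H" "r' \<in> ?H" "g r = g r'"
    then have "g r \<in> I r \<inter> I r'"
      using g by auto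
    then show "r = r'"
      using disjoint_family_onD[OF assms(2)] \<open>r \<in> ?H\<close> \<open>r' \<in> ?H\<close> by blast
  qed
  with g assms(1) show ?thesis
    by (intro card_inj_on_le) auto
qed

lemma card_indices_filter:
  assumes "distinct xs"
  shows "card {i \<in> {1..length xs}. P (xs ! (i - 1))} = card {x \<in> set xs. P x}"
proof -
  have "{i \<in> {1..length xs}. P (xs ! (i - 1))} = Suc ` {i. i < length xs \<and> P (xs ! i)}"
  proof (intro set_eqI iffI)
    fix i
    assume "i \<in> {i \<in> {1..length xs}. P (xs ! (i - 1))}"
    then show "i \<in> Suc ` {i. i < length xs \<and> P (xs ! i)}"
      by (intro image_eqI[of _ _ "i - 1"]) auto
  qed auto
  then have "card {i \<in> {1..length xs}. P (xs ! (i - 1))} = length (filter P xs)"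
    by (simp add: card_image length_filter_conv_card)
  also have "\<dots> = card {x \<in> set xs. P x}"
    using assms by (simp add: distinct_card[symmetric])
  finally show ?thesis .
qed

lemma card_uncovered_edge_indices:
  assumes "distinct es"
  shows "card {i \<in> {1..length es}. es ! (i - 1) \<inter> U = {}}
    = length es - card {e \<in> set es. e \<inter> U \<noteq> {}}"
proof -
  have "{e \<in> set es. e \<inter> U = {}} = set es - {e \<in> set es. e \<inter> U \<noteq> {}}"
    by auto
  then have "card {e \<in> set es. e \<inter> U = {}} = length es - card {e \<in> set es. e \<inter> U \<noteq> {}}"
    using assms by (simp add: card_Diff_subset distinct_card)
  then show ?thesis
    using card_indices_filter[OF assms, of "\<lambda>e. e \<inter> U = {}"] by (simp only:)
qed

lemma inj_neg_ex: "inj (neg_ex es r)"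
  by (rule injI) (auto simp: neg_ex_def dest!: fun_cong[where x = None])

lemma inj_pos_ex: "inj (pos_ex es r)"
  by (rule injI) (auto simp: pos_ex_def dest!: fun_cong[where x = None])

definition block :: "'v set list \<Rightarrow> nat \<Rightarrow> nat set \<Rightarrow> 'v example set" where
  "block es r S = neg_ex es r ` S \<union> pos_ex es r ` {1..length es}"

definition d0_span :: "nat \<Rightarrow> nat \<Rightarrow> int set" where
  "d0_span m r = {int (2 * m * (r - 1)) <.. int (2 * m * (r - 1) + 2 * m)}"

lemma finite_block: "finite S \<Longrightarrow> finite (block es r S)"
  by (simp add: block_def)

lemma instance_E_eq_blocks: "instance_E es \<eta> = (\<Union>r\<in>{1..\<eta>}. block es r {1..length es})"
proof (intro equalityI subsetI)
  fix e
  assume "e \<in> instance_E es \<eta>"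
  then show "e \<in> (\<Union>r\<in>{1..\<eta>}. block es r {1..length es})"
    unfolding instance_E_def block_def by blast
next
  fix e
  assume "e \<in> (\<Union>r\<in>{1..\<eta>}. block es r {1..length es})"
  then obtain r i where "r \<in> {1..\<eta>}" "i \<in> {1..length es}" "e = neg_ex es r i \<or> e = pos_ex es r i"
    unfolding block_def by blast
  then show "e \<in> instance_E es \<eta>"
    unfolding instance_E_def by blast
qed

lemma d0_in_span:
  assumes "S \<subseteq> {1..length es}" and "e \<in> block es r S"
  shows "fst e None \<in> d0_span (length es) r"
  using assms by (auto simp: block_def neg_ex_def pos_ex_def d0_span_def)

lemma disjoint_family_d0_span: "disjoint_family_on (d0_span m) {1..}"
unfolding disjoint_family_on_def
proof (intro ballI impI)
  have "d0_span m r \<inter> d0_span m r' = {}" if "1 \<le> r" "r < r'" for r r'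
  proof -
    have "2 * m * (r - 1) + 2 * m = 2 * m * r"
      using \<open>1 \<le> r\<close> by (cases r) simp_all
    also have "\<dots> \<le> 2 * m * (r' - 1)"
      using \<open>r < r'\<close> by (intro mult_le_mono2) linarith
    finally have le: "int (2 * m * (r - 1) + 2 * m) \<le> int (2 * m * (r' - 1))"
      by (simp only: of_nat_le_iff)
    show ?thesis
    proof (intro Int_emptyI)
      fix x
      assume "x \<in> d0_span m r" "x \<in> d0_span m r'"
      then have "x \<le> int (2 * m * (r - 1) + 2 * m)" "int (2 * m * (r' - 1)) < x"
        unfolding d0_span_def greaterThanAtMost_iff by blast+
      with le show False
        by linarith
    qed
  qed
  then show "d0_span m r \<inter> d0_span m r' = {}" if "r \<in> {1..}" "r' \<in> {1..}" "r \<noteq> r'" for r r'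
    using that by (metis Int_commute atLeast_iff linorder_neqE_nat)
qed

lemma disjoint_family_blocks: "disjoint_family_on (\<lambda>r. block es r {1..length es}) {1..}"
  unfolding disjoint_family_on_def
proof (intro ballI impI Int_emptyI)
  fix r r' e
  assume r: "r \<in> {1..}" "r' \<in> {1..}" "r \<noteq> r'"
    and e: "e \<in> block es r {1..length es}" "e \<in> block es r' {1..length es}"
  then have "fst e None \<in> d0_span (length es) r \<inter> d0_span (length es) r'"
    using d0_in_span[OF order_refl] by blast
  then show False
    using disjoint_family_onD[OF disjoint_family_d0_span r] by blast
qed

lemma block_vertex_split:
  "{e \<in> block es r S. fst e (Some v) \<le> 0} = block es r {i \<in> S. v \<notin> es ! (i - 1)}"
  by (auto simp: block_def neg_ex_def pos_ex_def)

lemma card_le_outliers_Leaf: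
  assumes "S \<subseteq> {1..length es}"
  shows "card S \<le> card (outliers (Leaf b) (block es r S))"
proof -
  have fin: "finite (outliers (Leaf b) (block es r S))"
    using finite_subset[OF assms] by (intro finite_outliers finite_block) simp
  show ?thesis
  proof (cases b)
    case True
    then have "neg_ex es r ` S \<subseteq> outliers (Leaf b) (block es r S)"
      by (auto simp: outliers_def block_def neg_ex_def)
    then have "card (neg_ex es r ` S) \<le> card (outliers (Leaf b) (block es r S))"
      by (rule card_mono[OF fin])
    then show ?thesis
      by (simp add: card_image inj_on_subset[OF inj_neg_ex])
  next
    case False
    have "card S \<le> length es"
      using card_mono[OF _ assms] by simp
    also have "\<dots> = card (pos_ex es r ` {1..length es})"
      by (simp add: card_image inj_on_subset[OF inj_pos_ex])
    also have "\<dots> \<le> card (outliers (Leaf b) (block es r S))"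
      using False by (intro card_mono[OF fin]) (auto simp: outliers_def block_def pos_ex_def)
    finally show ?thesis .
  qed
qed

lemma block_Node_cases:
  assumes "S \<subseteq> {1..length es}" and "f = None \<Longrightarrow> t \<notin> d0_span (length es) r"
  obtains (left) "\<forall>e\<in>block es r S. fst e f \<le> t"
    | (right) "\<forall>e\<in>block es r S. t < fst e f"
    | (vertex) v where "f = Some v" "t = 0"
proof (cases f)
  case None
  have span: "fst e f \<in> d0_span (length es) r" if "e \<in> block es r S" for e
    using d0_in_span[OF assms(1) that] None by simp
  consider "t \<le> int (2 * length es * (r - 1))" | "int (2 * length es * (r - 1) + 2 * length es) < t"
    using assms(2)[OF None] by (force simp: d0_span_def)
  then show ?thesis
  proof cases
    case 1
    with span show ?thesis
      by (intro right) (fastforce simp: d0_span_def)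
  next
    case 2
    with span show ?thesis
      by (intro left) (fastforce simp: d0_span_def)
  qed
next
  case (Some v)
  have zero_one: "fst e f = 0 \<or> fst e f = 1" if "e \<in> block es r S" for e
    using that Some by (auto simp: block_def neg_ex_def pos_ex_def)
  consider "t < 0" | "1 \<le> t" | "t = 0"
    by linarith
  then show ?thesis
  proof cases
    case 1
    with zero_one show ?thesis
      by (intro right) force
  next
    case 2
    with zero_one show ?thesis
      by (intro left) force
  next
    case 3
    with Some show ?thesis
      by (rule vertex)
  qed
qed

lemma card_outliers_vertex_Node_le:
  assumes "S \<subseteq> {1..length es}"
  shows "card (outliers l (block es r {i \<in> S. v \<notin> es ! (i - 1)}))
    \<le> card (outliers (Node (Some v) 0 l rt) (block es r S))"
proof (rule card_mono)
  show "finite (outliers (Node (Some v) 0 l rt) (block es r S))"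
    using finite_subset[OF assms] by (intro finite_outliers finite_block) simp
  show "outliers l (block es r {i \<in> S. v \<notin> es ! (i - 1)})
    \<subseteq> outliers (Node (Some v) 0 l rt) (block es r S)"
    by (simp add: outliers_Node block_vertex_split)
qed

lemma uncut_block_outliers:
  assumes "thresholds None T \<inter> d0_span (length es) r = {}" and "S \<subseteq> {1..length es}"
  shows "\<exists>W. Some ` W \<subseteq> tree_feats T \<and> card W \<le> dep T \<and>
    card {i \<in> S. es ! (i - 1) \<inter> W = {}} \<le> card (outliers T (block es r S))"
  using assms
proof (induction T arbitrary: S)
  case (Leaf b)
  then show ?case
    using card_le_outliers_Leaf[of S es b r] by (intro exI[of _ "{}"]) simp
next
  case (Node f t l rt)
  let ?T = "Node f t l rt"
  have uncut: "thresholds None l \<inter> d0_span (length es) r = {}"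
    "thresholds None rt \<inter> d0_span (length es) r = {}"
    using Node.prems(1) by auto
  have "f = None \<Longrightarrow> t \<notin> d0_span (length es) r"
    using Node.prems(1) by auto
  then consider (left) "\<forall>e\<in>block es r S. fst e f \<le> t"
    | (right) "\<forall>e\<in>block es r S. t < fst e f"
    | (vertex) v where "f = Some v" "t = 0"
    by (rule block_Node_cases[OF Node.prems(2)])
  then show ?case
  proof cases
    case left
    then have "outliers ?T (block es r S) = outliers l (block es r S)"
      by (rule outliers_Node_left)
    moreover obtain W where "Some ` W \<subseteq> tree_feats l" "card W \<le> dep l"
      "card {i \<in> S. es ! (i - 1) \<inter> W = {}} \<le> card (outliers l (block es r S))"
      using Node.IH(1)[OF uncut(1) Node.prems(2)] by blast
    ultimately show ?thesis
      by (intro exI[of _ W]) auto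
  next
    case right
    then have "outliers ?T (block es r S) = outliers rt (block es r S)"
      by (rule outliers_Node_right)
    moreover obtain W where "Some ` W \<subseteq> tree_feats rt" "card W \<le> dep rt"
      "card {i \<in> S. es ! (i - 1) \<inter> W = {}} \<le> card (outliers rt (block es r S))"
      using Node.IH(2)[OF uncut(2) Node.prems(2)] by blast
    ultimately show ?thesis
      by (intro exI[of _ W]) auto
  next
    case (vertex v)
    define S' where "S' = {i \<in> S. v \<notin> es ! (i - 1)}"
    obtain W where W: "Some ` W \<subseteq> tree_feats l" "card W \<le> dep l"
      "card {i \<in> S'. es ! (i - 1) \<inter> W = {}} \<le> card (outliers l (block es r S'))"
      using Node.IH(1)[OF uncut(1), of S'] Node.prems(2) by (auto simp: S'_def)
    have "card (outliers l (block es r S')) \<le> card (outliers ?T (block es r S))"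
      unfolding S'_def vertex by (rule card_outliers_vertex_Node_le[OF Node.prems(2)])
    moreover have "{i \<in> S'. es ! (i - 1) \<inter> W = {}} = {i \<in> S. es ! (i - 1) \<inter> insert v W = {}}"
      by (auto simp: S'_def)
    moreover have "card (insert v W) \<le> dep ?T"
      using W(2) by (intro card_insert_le_m1) auto
    ultimately show ?thesis
      using W vertex by (intro exI[of _ "insert v W"]) auto
  qed
qed

fun cover_tree :: "'v list \<Rightarrow> 'v option dtree" where
  "cover_tree [] = Leaf True"
| "cover_tree (u # us) = Node (Some u) 0 (cover_tree us) (Leaf False)"

lemma dep_cover_tree: "dep (cover_tree us) = length us"
  by (induction us) auto

lemma tree_feats_cover_tree: "tree_feats (cover_tree us) = Some ` set us"
  by (induction us) auto

lemma classify_cover_tree: "classify (cover_tree us) x \<longleftrightarrow> (\<forall>u\<in>set us. x (Some u) \<le> 0)"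
  by (induction us) auto

lemma outliers_cover_tree:
  "outliers (cover_tree us) (instance_E es \<eta>)
     \<subseteq> (\<lambda>(r, i). neg_ex es r i) ` ({1..\<eta>} \<times> {i \<in> {1..length es}. es ! (i - 1) \<inter> set us = {}})"
    (is "_ \<subseteq> ?N")
proof
  fix e
  assume "e \<in> outliers (cover_tree us) (instance_E es \<eta>)"
  then have e: "e \<in> instance_E es \<eta>" "classify (cover_tree us) (fst e) \<noteq> snd e"
    by (auto simp: outliers_def)
  from e(1) obtain r i where ri: "r \<in> {1..\<eta>}" "i \<in> {1..length es}"
    and "e = neg_ex es r i \<or> e = pos_ex es r i"
    unfolding instance_E_def by blast
  then have "e = neg_ex es r i" "es ! (i - 1) \<inter> set us = {}"
    using e(2) by (auto simp: classify_cover_tree neg_ex_def pos_ex_def)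
  with ri show "e \<in> ?N"
    by auto
qed

lemma card_outliers_cover_tree:
  assumes "distinct es"
  shows "card (outliers (cover_tree us) (instance_E es \<eta>))
    \<le> \<eta> * (length es - card {e \<in> set es. e \<inter> set us \<noteq> {}})"
proof -
  let ?M = "{i \<in> {1..length es}. es ! (i - 1) \<inter> set us = {}}"
  have "card (outliers (cover_tree us) (instance_E es \<eta>))
      \<le> card ((\<lambda>(r, i). neg_ex es r i) ` ({1..\<eta>} \<times> ?M))"
    by (intro card_mono outliers_cover_tree) auto
  also have "\<dots> \<le> card ({1..\<eta>} \<times> ?M)"
    by (rule card_image_le) auto
  also have "\<dots> = \<eta> * (length es - card {e \<in> set es. e \<inter> set us \<noteq> {}})"
    using card_uncovered_edge_indices[OF assms, of "set us"] by (simp add: card_cartesian_product)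
  finally show ?thesis .
qed

lemma tree_of_vertex_cover:
  fixes V :: "'v set" and es :: "'v set list"
  assumes "simple_graph V es" and "U \<subseteq> V" and "card U \<le> k"
    and "p \<le> card {e \<in> set es. e \<inter> U \<noteq> {}}"
  shows "\<exists>T :: 'v option dtree. tree_feats T \<subseteq> features V \<and> dep T \<le> k \<and>
    card (outliers T (instance_E es \<eta>)) \<le> (length es - p) * \<eta>"
proof -
  have "finite U" and dist: "distinct es"
    using assms(1,2) finite_subset by (auto simp: simple_graph_def)
  then obtain us where us: "set us = U" "distinct us"
    using finite_distinct_list by blast
  have "card (outliers (cover_tree us) (instance_E es \<eta>))
      \<le> \<eta> * (length es - card {e \<in> set es. e \<inter> U \<noteq> {}})"
    using card_outliers_cover_tree[OF dist, of us] us(1) by simp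
  also have "\<dots> \<le> (length es - p) * \<eta>"
    using assms(4) by (simp add: diff_le_mono2)
  finally have "card (outliers (cover_tree us) (instance_E es \<eta>)) \<le> (length es - p) * \<eta>" .
  moreover have "tree_feats (cover_tree us) \<subseteq> features V"
    using us(1) assms(2) by (auto simp: tree_feats_cover_tree features_def)
  moreover have "dep (cover_tree us) \<le> k"
    using us assms(3) distinct_card[of us] by (simp add: dep_cover_tree)
  ultimately show ?thesis
    by blast
qed

lemma card_uncut_blocks_ge:
  "\<eta> - (2 ^ dep T - 1) \<le> card {r \<in> {1..\<eta>}. thresholds None T \<inter> d0_span m r = {}}"
proof -
  let ?R = "{r \<in> {1..\<eta>}. thresholds None T \<inter> d0_span m r = {}}"
  have "{1..\<eta>} - ?R = {r \<in> {1..\<eta>}. thresholds None T \<inter> d0_span m r \<noteq> {}}"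
    by auto
  then have "card ({1..\<eta>} - ?R) \<le> card (thresholds None T)"
    by (simp only:) (intro card_meeting_disjoint_family_le finite_thresholds
        disjoint_family_on_mono[OF _ disjoint_family_d0_span], auto)
  also have "\<dots> \<le> 2 ^ dep T - 1"
    by (rule card_thresholds_le)
  finally have "card ({1..\<eta>} - ?R) \<le> 2 ^ dep T - 1" .
  moreover have "card ({1..\<eta>} - ?R) = \<eta> - card ?R"
    by (subst card_Diff_subset) auto
  ultimately show ?thesis
    by linarith
qed

lemma sum_card_outliers_blocks_le:
  assumes "R \<subseteq> {1..\<eta>}"
  shows "(\<Sum>r\<in>R. card (outliers T (block es r {1..length es}))) \<le> card (outliers T (instance_E es \<eta>))"
proof -
  have "(\<Sum>r\<in>R. card (outliers T (block es r {1..length es})))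
      = card (\<Union>r\<in>R. outliers T (block es r {1..length es}))"
  proof (rule card_UN_disjoint'[symmetric])
    show "disjoint_family_on (\<lambda>r. outliers T (block es r {1..length es})) R"
      using assms by (intro disjoint_family_outliers disjoint_family_on_mono[OF _ disjoint_family_blocks]) auto
    show "finite (outliers T (block es r {1..length es}))" for r
      by (intro finite_outliers finite_block) simp
    show "finite R"
      using assms finite_subset by blast
  qed
  also have "\<dots> \<le> card (outliers T (instance_E es \<eta>))"
  proof (rule card_mono)
    show "finite (outliers T (instance_E es \<eta>))"
      by (intro finite_outliers) (simp add: instance_E_eq_blocks finite_block)
    show "(\<Union>r\<in>R. outliers T (block es r {1..length es})) \<subseteq> outliers T (instance_E es \<eta>)"
      using assms by (auto simp: instance_E_eq_blocks outliers_def)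
  qed
  finally show ?thesis .
qed

lemma card_outliers_uncut_block_without_cover:
  fixes V :: "'v set" and es :: "'v set list" and T :: "'v option dtree"
  assumes "simple_graph V es" and "p \<le> length es" and "tree_feats T \<subseteq> features V"
    and no_cover: "\<And>U. U \<subseteq> V \<Longrightarrow> card U \<le> dep T \<Longrightarrow> card {e \<in> set es. e \<inter> U \<noteq> {}} < p"
    and uncut: "thresholds None T \<inter> d0_span (length es) r = {}"
  shows "length es - p + 1 \<le> card (outliers T (block es r {1..length es}))"
proof -
  obtain W where W: "Some ` W \<subseteq> tree_feats T" "card W \<le> dep T"
    "card {i \<in> {1..length es}. es ! (i - 1) \<inter> W = {}} \<le> card (outliers T (block es r {1..length es}))"
    using uncut_block_outliers[OF uncut order_refl] by blast
  have "W \<subseteq> V"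
    using W(1) assms(3) by (auto simp: features_def)
  then have "card {e \<in> set es. e \<inter> W \<noteq> {}} < p"
    using W(2) by (rule no_cover)
  moreover have "distinct es"
    using assms(1) by (simp add: simple_graph_def)
  ultimately show ?thesis
    using W(3) card_uncovered_edge_indices[of es W] assms(2) by linarith
qed

lemma card_outliers_without_cover:
  fixes V :: "'v set" and es :: "'v set list" and T :: "'v option dtree"
  assumes "simple_graph V es" and "p \<le> length es" and "tree_feats T \<subseteq> features V"
    and "\<And>U. U \<subseteq> V \<Longrightarrow> card U \<le> dep T \<Longrightarrow> card {e \<in> set es. e \<inter> U \<noteq> {}} < p"
  shows "(\<eta> - (2 ^ dep T - 1)) * (length es - p + 1) \<le> card (outliers T (instance_E es \<eta>))"
proof -
  define R where "R = {r \<in> {1..\<eta>}. thresholds None T \<inter> d0_span (length es) r = {}}"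
  have "(\<eta> - (2 ^ dep T - 1)) * (length es - p + 1) \<le> card R * (length es - p + 1)"
    unfolding R_def by (intro mult_right_mono card_uncut_blocks_ge) simp
  also have "\<dots> = (\<Sum>r\<in>R. length es - p + 1)"
    by simp
  also have "\<dots> \<le> (\<Sum>r\<in>R. card (outliers T (block es r {1..length es})))"
    using card_outliers_uncut_block_without_cover[OF assms] by (intro sum_mono) (simp add: R_def)
  also have "\<dots> \<le> card (outliers T (instance_E es \<eta>))"
    by (rule sum_card_outliers_blocks_le) (auto simp: R_def)
  finally show ?thesis .
qed

lemma outlier_budget_exceeded:
  fixes K l :: nat
  assumes "0 < K"
  shows "l * (K * (l + 2)) < (K * (l + 2) - (K - 1)) * (l + 1)"
proof -
  have "K * (l + 2) - (K - 1) = K * (l + 1) + 1"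
    using assms by (simp add: algebra_simps)
  then show ?thesis
    using assms by (simp add: algebra_simps)
qed

theorem lemma5:
  fixes V :: "'v set" and es :: "'v set list" and k p :: nat
  assumes "simple_graph V es"
    and "length es \<ge> 1"
    and "k \<ge> 1"
    and "p \<le> length es"
  shows "(\<exists>U. U \<subseteq> V \<and> card U \<le> k \<and> card {e \<in> set es. e \<inter> U \<noteq> {}} \<ge> p)
     \<longleftrightarrow> (\<exists>T :: 'v option dtree. tree_feats T \<subseteq> features V \<and> dep T \<le> k \<and>
            card (outliers T (instance_E es (2 ^ k * (length es - p + 2))))
              \<le> (length es - p) * (2 ^ k * (length es - p + 2)))"
    (is "?cover \<longleftrightarrow> (\<exists>T. ?good T)")
proof
  assume ?cover
  then show "\<exists>T. ?good T"
    using tree_of_vertex_cover[OF assms(1)] by blast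
next
  let ?l = "length es - p" and ?\<eta> = "2 ^ k * (length es - p + 2)"
  assume "\<exists>T. ?good T"
  then obtain T :: "'v option dtree" where feats: "tree_feats T \<subseteq> features V"
    and dep: "dep T \<le> k" and budget: "card (outliers T (instance_E es ?\<eta>)) \<le> ?l * ?\<eta>"
    by blast
  show ?cover
  proof (rule ccontr)
    assume "\<not> ?cover"
    then have no_cover: "card {e \<in> set es. e \<inter> U \<noteq> {}} < p"
      if "U \<subseteq> V" "card U \<le> dep T" for U
      using that dep by (meson le_trans not_le)
    have "(?\<eta> - (2 ^ k - 1)) * (?l + 1) \<le> (?\<eta> - (2 ^ dep T - 1)) * (?l + 1)"
      using dep by (intro mult_right_mono diff_le_mono2 diff_le_mono power_increasing) auto
    also have "\<dots> \<le> card (outliers T (instance_E es ?\<eta>))"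
      using card_outliers_without_cover[OF assms(1,4) feats no_cover] by simp
    also have "\<dots> \<le> ?l * ?\<eta>"
      by (rule budget)
    finally have "(?\<eta> - (2 ^ k - 1)) * (?l + 1) \<le> ?l * ?\<eta>" .
    moreover have "?l * ?\<eta> < (?\<eta> - (2 ^ k - 1)) * (?l + 1)"
      by (rule outlier_budget_exceeded) simp
    ultimately show False
      by linarith
  qed
qed

end
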